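(* For any constants $\beta_1, \beta_2 \in [0,1)$ with $\beta_1 < \sqrt{\beta_2}$, there exist a one-dimensional online convex optimization problem (a compact convex feasible set $\mathcal{F} \subset \mathbb{R}$ and a sequence of convex loss functions $f_t$ with uniformly bounded gradients) and an initial point $x_1 \in \mathcal{F}$ such that, for every initial step size $\alpha > 0$, the iterates of \textsc{Adam} with parameters $\alpha, \beta_1, \beta_2$ satisfy $R_T/T \not\to 0$ as $T \to \infty$.
   Context: \textsc{Adam} (without debiasing) on a closed convex set $\mathcal{F} \subset \mathbb{R}^d$ with loss functions $f_1, f_2, \dots$, initial point $x_1 \in \mathcal{F}$, initial step size $\alpha > 0$ and constants $\beta_1, \beta_2 \in [0,1)$ is defined as follows. Set $m_0 = v_0 = 0 \in \mathbb{R}^d$. For $t = 1, 2, \dots$: $g_t = \nabla f_t(x_t)$; $m_t = \beta_1 m_{t-1} + (1-\beta_1) g_t$; $v_t = \beta_2 v_{t-1} + (1-\beta_2) g_t^2$ (square taken coordinatewise); $V_t = \mathrm{diag}(v_t)$; $\alpha_t = \alpha/\sqrt{t}$; $\hat{x}_{t+1} = x_t - \alpha_t V_t^{-1/2} m_t$; $x_{t+1} = \Pi_{\mathcal{F}, \sqrt{V_t}}(\hat{x}_{t+1})$, where for a positive definite matrix $M$, $\Pi_{\mathcal{F}, M}(y) = \arg\min_{x \in \mathcal{F}} \|M^{1/2}(x-y)\|$. The regret after $T$ steps is $R_T = \sum_{t=1}^T f_t(x_t) - \min_{x \in \mathcal{F}} \sum_{t=1}^T f_t(x)$. *)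

theory Defs
  imports "HOL-Analysis.Analysis"
begin

text \<open>Weighted projection onto F (one-dimensional): for the 1x1 positive definite
  matrix V = diag(v), Pi_{F,sqrt V}(y) = argmin over x in F of |(sqrt V)^(1/2) (x - y)|,
  where (sqrt V)^(1/2) = v powr (1/4).\<close>
definition wproj :: "real set \<Rightarrow> real \<Rightarrow> real \<Rightarrow> real" where
  "wproj F M y = (THE x. x \<in> F \<and> (\<forall>z\<in>F. \<bar>sqrt M * (x - y)\<bar> \<le> \<bar>sqrt M * (z - y)\<bar>))"

text \<open>Adam without debiasing, one-dimensional. adam_state a b1 b2 f F x1 n = (x_{n+1}, m_n, v_n).\<close>
fun adam_state :: "real \<Rightarrow> real \<Rightarrow> real \<Rightarrow> (nat \<Rightarrow> real \<Rightarrow> real) \<Rightarrow> real set \<Rightarrow> real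
    \<Rightarrow> nat \<Rightarrow> real \<times> real \<times> real" where
  "adam_state a b1 b2 f F x1 0 = (x1, 0, 0)"
| "adam_state a b1 b2 f F x1 (Suc n) =
    (let (x, m, v) = adam_state a b1 b2 f F x1 n;
         t = Suc n;
         g = deriv (f t) x;
         m' = b1 * m + (1 - b1) * g;
         v' = b2 * v + (1 - b2) * g ^ 2;
         stp = a / sqrt (real t);
         xh = x - stp * m' / sqrt v'
     in (wproj F (sqrt v') xh, m', v'))"

definition adam_x :: "real \<Rightarrow> real \<Rightarrow> real \<Rightarrow> (nat \<Rightarrow> real \<Rightarrow> real) \<Rightarrow> real set \<Rightarrow> real
    \<Rightarrow> nat \<Rightarrow> real" where
  "adam_x a b1 b2 f F x1 t = fst (adam_state a b1 b2 f F x1 (t - 1))"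

definition adam_regret :: "real \<Rightarrow> real \<Rightarrow> real \<Rightarrow> (nat \<Rightarrow> real \<Rightarrow> real) \<Rightarrow> real set \<Rightarrow> real
    \<Rightarrow> nat \<Rightarrow> real" where
  "adam_regret a b1 b2 f F x1 T =
     (\<Sum>t=1..T. f t (adam_x a b1 b2 f F x1 t)) - (INF x\<in>F. \<Sum>t=1..T. f t x)"

end

theory Submission
  imports Defs "HOL-Real_Asymp.Real_Asymp"
begin

text \<open>The counterexample is the linear loss \<open>f\<^sub>t(x) = g\<^sub>t x\<close> on \<open>[-1, 1]\<close> whose gradients repeat
  with period \<open>p = 2K\<close>: one gradient \<open>p\<close>, then \<open>p - 1\<close> gradients \<open>-1\<close>. Each period has gradient sum
  \<open>+1\<close>, so \<open>x = -1\<close> is optimal and playing near \<open>+1\<close> costs about \<open>2/p\<close> per round. Adam, however,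
  drifts to \<open>+1\<close>: the large gradient inflates \<open>v\<^sub>t\<close> and so moves \<open>x\<close> down by only a geometric sum in
  \<open>r = \<beta>\<^sub>1/\<surd>\<beta>\<^sub>2 < 1\<close> (times the current rate \<open>\<alpha>/\<surd>t\<close>), while in the second half of a period
  \<open>v\<^sub>t\<close> has decayed and each of the \<open>K\<close> gradients \<open>-1\<close> moves \<open>x\<close> up by a fixed fraction of the rate.
  For \<open>K\<close> large the net drift per period is at least the rate; as the rates are not summable the
  iterates reach and stay near \<open>+1\<close>, so the regret grows linearly.\<close>

lemma wproj_atLeastAtMost:
  assumes "M > 0" and "lo \<le> hi"
  shows "wproj {lo..hi} M y = max lo (min hi y)"
  unfolding wproj_def
proof (rule the_equality)
  have s: "sqrt M > 0" using assms by simp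
  show "max lo (min hi y) \<in> {lo..hi} \<and>
      (\<forall>z\<in>{lo..hi}. \<bar>sqrt M * (max lo (min hi y) - y)\<bar> \<le> \<bar>sqrt M * (z - y)\<bar>)"
    using s assms(2) by (auto simp: abs_mult mult_le_cancel_left_pos)
  fix x assume x: "x \<in> {lo..hi} \<and> (\<forall>z\<in>{lo..hi}. \<bar>sqrt M * (x - y)\<bar> \<le> \<bar>sqrt M * (z - y)\<bar>)"
  hence "\<bar>x - y\<bar> \<le> \<bar>max lo (min hi y) - y\<bar>"
    using s assms(2) by (auto simp: abs_mult mult_le_cancel_left_pos dest!: bspec[where x="max lo (min hi y)"])
  thus "x = max lo (min hi y)" using x by (auto simp: abs_if split: if_splits)
qed

lemma lower_bound_of_truncated_steps:
  fixes x e :: "nat \<Rightarrow> real"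
  assumes step: "\<And>n. min hi (x n - e (Suc n)) \<le> x (Suc n)"
  shows "min (x i - (\<Sum>k<l. e (i + 1 + k))) (hi - (\<Sum>k<l. max (e (i + 1 + k)) 0)) \<le> x (i + l)"
proof (induction l)
  case (Suc l)
  have "0 \<le> (\<Sum>k<l. max (e (i + 1 + k)) 0)" by (intro sum_nonneg) auto
  with Suc step[of "i + l"] show ?case by (auto simp: min_def max_def split: if_splits)
qed simp

lemma eventually_ge_of_nonsummable_steps:
  fixes y a :: "nat \<Rightarrow> real"
  assumes step: "\<And>j. j \<ge> j0 \<Longrightarrow> min (y j + a j) c \<le> y (Suc j)"
    and nonneg: "\<And>j. 0 \<le> a j" and diverge: "\<not> summable a" and bounded: "\<And>j. y j \<le> U"
  shows "eventually (\<lambda>j. c \<le> y j) sequentially"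
proof -
  have "\<exists>j1\<ge>j0. c \<le> y j1"
  proof (rule ccontr)
    assume "\<not> ?thesis"
    hence below: "y j < c" if "j \<ge> j0" for j using that by auto
    have climb: "y j0 + (\<Sum>i<n. a (i + j0)) \<le> y (n + j0)" for n
    proof (induction n)
      case (Suc n)
      thus ?case using step[of "n + j0"] below[of "n + j0"] below[of "Suc n + j0"] by (simp add: min_def split: if_splits)
    qed simp
    have "summable (\<lambda>i. a (i + j0))"
    proof (rule summableI_nonneg_bounded)
      show "(\<Sum>i<n. a (i + j0)) \<le> U - y j0" for n using climb[of n] bounded[of "n + j0"] by simp
    qed (use nonneg in auto)
    with diverge show False by simp
  qed
  then obtain j1 where j1: "j1 \<ge> j0" "c \<le> y j1" by blast
  have "c \<le> y (j1 + i)" for i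
  proof (induction i)
    case (Suc i)
    thus ?case using step[of "j1 + i"] nonneg[of "j1 + i"] j1(1) by simp
  qed (use j1 in simp)
  hence "\<forall>j\<ge>j1. c \<le> y j" by (metis le_add_diff_inverse)
  thus ?thesis unfolding eventually_sequentially by blast
qed

lemma average_not_tendsto_zero_of_linear_lower_bound:
  fixes R :: "nat \<Rightarrow> real"
  assumes a: "a > 0" and lower: "\<And>T. a * real T - c \<le> R T"
  shows "\<not> (\<lambda>T. R T / real T) \<longlonglongrightarrow> 0"
proof
  assume lim: "(\<lambda>T. R T / real T) \<longlonglongrightarrow> 0"
  have asymp: "(\<lambda>T. a - c / real T) \<longlonglongrightarrow> a" by real_asymp
  have ev: "eventually (\<lambda>T. a - c / real T \<le> R T / real T) sequentially"
    using eventually_gt_at_top[of 0]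
  proof eventually_elim
    case (elim T)
    have "(a * real T - c) / real T \<le> R T / real T" by (rule divide_right_mono[OF lower]) simp
    with elim show ?case by (simp add: diff_divide_distrib)
  qed
  have "a \<le> 0" by (rule tendsto_le[OF sequentially_bot lim asymp ev])
  with a show False by simp
qed

lemma tendsto_power_mult_square:
  fixes b :: real
  assumes "0 \<le> b" "b < 1"
  shows "(\<lambda>n. b ^ n * real n ^ 2) \<longlonglongrightarrow> 0"
proof -
  have "(\<lambda>n. (real n * sqrt b ^ n) ^ 2) \<longlonglongrightarrow> 0 ^ 2"
    using assms by (intro tendsto_intros powser_times_n_limit_0) simp
  moreover have "(real n * sqrt b ^ n) ^ 2 = b ^ n * real n ^ 2" for n
    using assms by (simp add: power_mult_distrib power2_eq_square flip: power_mult_distrib)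
  ultimately show ?thesis by simp
qed

lemma sum_initial_segment_le:
  fixes c :: real
  assumes "0 \<le> c"
  shows "(\<Sum>t=1..T. if t \<le> N then c else 0) \<le> c * real N"
proof -
  have "(\<Sum>t=1..T. if t \<le> N then c else 0) = c * real (card {t\<in>{1..T}. t \<le> N})"
    by (simp add: sum.inter_filter[symmetric])
  also have "card {t\<in>{1..T}. t \<le> N} \<le> card {1..N}" by (intro card_mono) auto
  finally show ?thesis using assms by (simp add: mult_left_mono)
qed

lemma geometric_partial_sum_le:
  fixes r :: real
  assumes "0 \<le> r" "r < 1"
  shows "(\<Sum>k<l. r ^ k) \<le> 1 / (1 - r)"
proof -
  have "(\<Sum>k<l. r ^ k) = (1 - r ^ l) / (1 - r)" using assms by (simp add: sum_gp_strict)
  also have "\<dots> \<le> 1 / (1 - r)" using assms by (intro divide_right_mono) auto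
  finally show ?thesis .
qed

text \<open>The step towards \<open>-1\<close> in phase \<open>k\<close> of a period is at most \<open>\<alpha>/\<surd>t \<cdot> r\<^sup>k/\<surd>(1-\<beta>\<^sub>2)\<close> with
  \<open>r = \<beta>\<^sub>1/\<surd>\<beta>\<^sub>2\<close>; this is the sum of that geometric series per unit of rate, finite exactly
  because \<open>\<beta>\<^sub>1 < \<surd>\<beta>\<^sub>2\<close>.\<close>

definition backtrack_bound :: "real \<Rightarrow> real \<Rightarrow> real" where
  "backtrack_bound b1 b2 = 1 / (sqrt (1 - b2) * (1 - b1 / sqrt b2))"

lemma eventually_long_period:
  fixes b1 b2 :: real
  assumes "0 \<le> b1" "b1 < 1" "0 \<le> b2" "b2 < 1"
  shows "\<forall>\<^sub>F K in sequentially. 1 \<le> K \<and> b2 ^ K * real (2 * K) ^ 2 \<le> 1 \<and>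
           backtrack_bound b1 b2 + 1 \<le> real K * (1 - b1) / 4"
proof (intro eventually_conj)
  have "(\<lambda>K. 4 * (b2 ^ K * real K ^ 2)) \<longlonglongrightarrow> 4 * 0"
    using assms by (intro tendsto_intros tendsto_power_mult_square)
  hence "\<forall>\<^sub>F K in sequentially. 4 * (b2 ^ K * real K ^ 2) < 1"
    by (rule order_tendstoD) simp
  thus "\<forall>\<^sub>F K in sequentially. b2 ^ K * real (2 * K) ^ 2 \<le> 1"
    by eventually_elim (simp add: power_mult_distrib)
  have "filterlim (\<lambda>K. real K * (1 - b1) / 4) at_top sequentially"
    using assms by real_asymp
  thus "\<forall>\<^sub>F K in sequentially. backtrack_bound b1 b2 + 1 \<le> real K * (1 - b1) / 4"
    unfolding filterlim_at_top by (rule spec)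
qed (rule eventually_ge_at_top)

definition periodic_grad :: "nat \<Rightarrow> nat \<Rightarrow> real" where
  "periodic_grad p t = (if (t - 1) mod p = 0 then real p else -1)"

definition periodic_loss :: "nat \<Rightarrow> nat \<Rightarrow> real \<Rightarrow> real" where
  "periodic_loss p t x = periodic_grad p t * x"

lemma deriv_periodic_loss: "deriv (periodic_loss p t) x = periodic_grad p t"
proof (rule DERIV_imp_deriv)
  show "(periodic_loss p t has_real_derivative periodic_grad p t) (at x)"
    unfolding periodic_loss_def[abs_def] by (auto intro!: derivative_eq_intros)
qed

lemma differentiable_periodic_loss: "periodic_loss p t differentiable (at x)"
  unfolding periodic_loss_def[abs_def] by (intro derivative_intros)

lemma convex_periodic_loss: "convex_on UNIV (periodic_loss p t)"
  unfolding convex_on_def periodic_loss_def by (auto simp: algebra_simps)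

lemma abs_periodic_grad_le: "1 \<le> p \<Longrightarrow> \<bar>periodic_grad p t\<bar> \<le> real p"
  by (simp add: periodic_grad_def)

lemma sum_periodic_grad:
  assumes p: "0 < p"
  shows "(\<Sum>t=1..T. periodic_grad p t)
           = real (T div p) + (if T mod p = 0 then 0 else real p - real (T mod p - 1))"
proof (induction T)
  case (Suc T)
  have last: "(\<Sum>t=1..Suc T. periodic_grad p t)
      = (\<Sum>t=1..T. periodic_grad p t) + (if T mod p = 0 then real p else -1)"
    by (simp add: sum.cl_ivl_Suc periodic_grad_def)
  consider "T mod p = 0" | "T mod p \<noteq> 0" "Suc (T mod p) = p" | "T mod p \<noteq> 0" "Suc (T mod p) \<noteq> p"
    by blast
  thus ?case
  proof cases
    case 1
    moreover from 1 p have "Suc T mod p = (if p = 1 then 0 else 1)" "Suc T div p = T div p + (if p = 1 then 1 else 0)"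
      by (auto simp: mod_Suc div_Suc)
    ultimately show ?thesis using Suc last by auto
  next
    case 2
    hence "Suc T mod p = 0" "Suc T div p = Suc (T div p)" by (simp_all add: mod_Suc div_Suc)
    moreover have "real p - real (T mod p - 1) - 1 = 1" using 2 by (simp add: of_nat_diff)
    ultimately show ?thesis using Suc last 2 by simp
  next
    case 3
    hence "Suc T mod p = Suc (T mod p)" "Suc T div p = T div p" by (simp_all add: mod_Suc div_Suc)
    moreover have "real p - real (T mod p - 1) - 1 = real p - real (Suc (T mod p) - 1)"
      using 3 by (simp add: of_nat_diff)
    ultimately show ?thesis using Suc last 3 by simp
  qed
qed simp

lemma sum_periodic_grad_ge:
  assumes p: "0 < p"
  shows "real T / real p - 1 \<le> (\<Sum>t=1..T. periodic_grad p t)"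
proof -
  have "T mod p < p" using p by simp
  hence "real (T div p) \<le> (\<Sum>t=1..T. periodic_grad p t)"
    using sum_periodic_grad[OF p, of T] by (simp add: of_nat_diff)
  moreover have "T \<le> T div p * p + p" using \<open>T mod p < p\<close> div_mult_mod_eq[of T p] by linarith
  hence "real T \<le> (real (T div p) + 1) * real p" by (simp add: algebra_simps flip: of_nat_mult of_nat_add)
  hence "real T / real p \<le> real (T div p) + 1" using p by (simp add: divide_le_eq)
  ultimately show ?thesis by linarith
qed

locale adam_periodic =
  fixes b1 b2 \<alpha> :: real and K :: nat
  assumes b1: "0 \<le> b1" "b1 < 1" and b2: "0 < b2" "b2 < 1" and \<alpha>: "0 < \<alpha>" and K: "1 \<le> K"
begin

definition "p = 2 * K"
text \<open>\<open>X n\<close> is the iterate \<open>x\<^sub>n\<^sub>+\<^sub>1\<close>, while \<open>M n\<close> and \<open>V n\<close> are \<open>m\<^sub>n\<close> and \<open>v\<^sub>n\<close>.\<close>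
definition "state n = adam_state \<alpha> b1 b2 (periodic_loss p) {-1..1} 0 n"
definition "X n = fst (state n)"
definition "M n = fst (snd (state n))"
definition "V n = snd (snd (state n))"
definition "g t = periodic_grad p t"
definition "phase n = (n - 1) mod p"
text \<open>Stationary momentum \<open>k\<close> rounds after a large gradient, counting only the large gradients.\<close>
definition "mom_peak k = (1 - b1) * real p * b1 ^ k / (1 - b1 ^ p)"
definition "step n = \<alpha> / sqrt (real n) * M n / sqrt (V n)"

lemma state_0: "X 0 = 0" "M 0 = 0" "V 0 = 0"
  by (simp_all add: X_def M_def V_def state_def)

lemma state_Suc:
  "M (Suc n) = b1 * M n + (1 - b1) * g (Suc n)"
  "V (Suc n) = b2 * V n + (1 - b2) * g (Suc n) ^ 2"
  "X (Suc n) = wproj {-1..1} (sqrt (V (Suc n)))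
                 (X n - \<alpha> / sqrt (real (Suc n)) * M (Suc n) / sqrt (V (Suc n)))"
  by (simp_all add: X_def M_def V_def state_def g_def deriv_periodic_loss Let_def split: prod.split)

lemma p_ge_2: "2 \<le> p"
  using K by (simp add: p_def)

lemma g_cases: "g t = real p \<or> g t = -1"
  by (simp add: g_def periodic_grad_def)

lemma g_Suc: "g (Suc n) = (if n mod p = 0 then real p else -1)"
  by (simp add: g_def periodic_grad_def)

lemma phase_Suc:
  assumes "1 \<le> n"
  shows "phase (Suc n) = (if n mod p = 0 then 0 else Suc (phase n))"
    and "n mod p = 0 \<Longrightarrow> phase n = p - 1"
proof -
  obtain m where m: "n = Suc m" using assms by (cases n) auto
  have "m mod p < p" using p_ge_2 by simp
  thus "phase (Suc n) = (if n mod p = 0 then 0 else Suc (phase n))"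
    and "n mod p = 0 \<Longrightarrow> phase n = p - 1"
    by (auto simp: phase_def m mod_Suc split: if_splits)
qed

lemma b1_pow_p: "0 \<le> b1 ^ p" "b1 ^ p \<le> b1" "b1 ^ p < 1"
  using b1 p_ge_2 power_decreasing[of 1 p b1] by (simp_all add: power_less_one_iff)

lemma M_le:
  "1 \<le> n \<Longrightarrow> M n \<le> mom_peak (phase n) - (if 1 \<le> phase n then 1 - b1 else 0)"
proof (induction n rule: dec_induct)
  case base
  have "(1 - b1) * real p * (1 - b1 ^ p) \<le> (1 - b1) * real p"
    using b1 b1_pow_p by (simp add: mult_left_le)
  hence "(1 - b1) * real p \<le> mom_peak 0"
    using b1_pow_p by (simp add: mom_peak_def le_divide_eq)
  thus ?case using p_ge_2 by (simp add: state_Suc state_0 g_Suc phase_def)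
next
  case (step n)
  have IH: "b1 * M n \<le> b1 * mom_peak (phase n)"
    using step.IH b1 by (intro mult_left_mono) (auto split: if_splits)
  show ?case
  proof (cases "n mod p = 0")
    case True
    obtain q where q: "p = Suc q" using p_ge_2 by (cases p) auto
    have "1 - b1 * b1 ^ q \<noteq> 0" using b1_pow_p q by auto
    hence "b1 * mom_peak (p - 1) + (1 - b1) * real p = mom_peak 0"
      unfolding mom_peak_def q by (simp add: field_simps)
    moreover have "phase (Suc n) = 0" "phase n = p - 1" using True phase_Suc[OF step.hyps(1)] by simp_all
    ultimately show ?thesis using IH True by (simp add: state_Suc g_Suc)
  next
    case False
    have "b1 * mom_peak (phase n) = mom_peak (Suc (phase n))"
      by (simp add: mom_peak_def field_simps)
    moreover have "phase (Suc n) = Suc (phase n)" using False phase_Suc(1)[OF step.hyps(1)] by simp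
    ultimately show ?thesis using IH False by (simp add: state_Suc g_Suc)
  qed
qed

lemma V_bounds:
  "1 \<le> n \<Longrightarrow> (1 - b2) * real p ^ 2 * b2 ^ phase n \<le> V n \<and> V n \<le> real p ^ 2 * b2 ^ phase n + 1"
proof (induction n rule: dec_induct)
  case base
  have "(1 - b2) * real p ^ 2 \<le> real p ^ 2" using b2 by (simp add: mult_left_le_one_le)
  thus ?case using b2 by (simp add: state_Suc state_0 g_Suc phase_def)
next
  case (step n)
  have "0 \<le> (1 - b2) * real p ^ 2 * b2 ^ phase n" using b2 by simp
  hence V0: "0 \<le> V n" using step.IH by linarith
  show ?case
  proof (cases "n mod p = 0")
    case True
    have "real p ^ 2 * b2 ^ phase n \<le> real p ^ 2"
      using b2 by (simp add: power_le_one mult_left_le)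
    hence "b2 * V n \<le> b2 * (real p ^ 2 + 1)" using step.IH b2 by (intro mult_left_mono) auto
    moreover have "phase (Suc n) = 0" using True phase_Suc(1)[OF step.hyps(1)] by simp
    ultimately show ?thesis using True V0 b2 by (simp add: state_Suc g_Suc algebra_simps)
  next
    case False
    have ph: "phase (Suc n) = Suc (phase n)" using False phase_Suc(1)[OF step.hyps(1)] by simp
    have "b2 * ((1 - b2) * real p ^ 2 * b2 ^ phase n) \<le> b2 * V n"
      using step.IH b2 by (intro mult_left_mono) auto
    moreover have "b2 * V n \<le> b2 * (real p ^ 2 * b2 ^ phase n + 1)"
      using step.IH b2 by (intro mult_left_mono) auto
    moreover have "V (Suc n) = b2 * V n + (1 - b2)" using False by (simp add: state_Suc g_Suc)
    moreover have "(1 - b2) * real p ^ 2 * b2 ^ phase (Suc n) = b2 * ((1 - b2) * real p ^ 2 * b2 ^ phase n)"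
      and "real p ^ 2 * b2 ^ phase (Suc n) + 1 = b2 * (real p ^ 2 * b2 ^ phase n + 1) + (1 - b2)"
      by (simp_all add: ph algebra_simps)
    ultimately show ?thesis using b2 by linarith
  qed
qed

lemma V_pos: "1 \<le> n \<Longrightarrow> 0 < V n"
proof -
  have "0 < (1 - b2) * real p ^ 2 * b2 ^ phase n" using b2 p_ge_2 by simp
  thus "1 \<le> n \<Longrightarrow> 0 < V n" using V_bounds[of n] by linarith
qed

lemma X_Suc: "X (Suc n) = max (-1) (min 1 (X n - step (Suc n)))"
  using V_pos[of "Suc n"] by (simp add: state_Suc(3)[of n] wproj_atLeastAtMost step_def)

lemma X_bounds: "-1 \<le> X n \<and> X n \<le> 1"
  by (cases n) (auto simp: state_0 X_Suc)

lemma sqrt_V_ge: "1 \<le> n \<Longrightarrow> sqrt (1 - b2) * real p * sqrt b2 ^ phase n \<le> sqrt (V n)"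
proof -
  have "sqrt ((1 - b2) * real p ^ 2 * b2 ^ phase n) = sqrt (1 - b2) * real p * sqrt b2 ^ phase n"
    by (simp add: real_sqrt_mult real_sqrt_power)
  thus "1 \<le> n \<Longrightarrow> ?thesis" using V_bounds[of n] by (metis real_sqrt_le_mono)
qed

end

text \<open>With \<open>K_variance\<close>, \<open>v\<^sub>t \<le> 4\<close> in the second half of every period, so each of its \<open>K\<close> gradients
  \<open>-1\<close> moves the iterate up by at least a quarter of \<open>(1 - \<beta>\<^sub>1)\<close> times the rate; \<open>K_drift\<close> makes
  this outweigh the backtrack.\<close>

locale adam_periodic_long = adam_periodic +
  assumes ratio: "b1 < sqrt b2"
    and K_variance: "b2 ^ K * real (2 * K) ^ 2 \<le> 1"
    and K_drift: "backtrack_bound b1 b2 + 1 \<le> real K * (1 - b1) / 4"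
begin

definition "r = b1 / sqrt b2"
definition "B = backtrack_bound b1 b2"
definition "rate j = \<alpha> / sqrt (real (j * p + 1))"
definition "Y j = X (j * p)"

lemma r_bounds: "0 \<le> r" "r < 1"
  using b1 b2 ratio by (auto simp: r_def)

lemma B_eq: "B = 1 / (sqrt (1 - b2) * (1 - r))"
  by (simp add: B_def backtrack_bound_def r_def)

lemma rate_pos: "0 < rate j"
  unfolding rate_def using \<alpha> by (intro divide_pos_pos) (simp_all del: of_nat_add of_nat_mult)

lemma mom_peak_div_sqrt_V:
  assumes "1 \<le> n"
  shows "mom_peak (phase n) / sqrt (V n) \<le> r ^ phase n / sqrt (1 - b2)"
proof -
  define k where "k = phase n"
  have den: "0 < sqrt (1 - b2) * real p * sqrt b2 ^ k" using b2 p_ge_2 by simp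
  have "mom_peak k / sqrt (V n) \<le> mom_peak k / (sqrt (1 - b2) * real p * sqrt b2 ^ k)"
    using sqrt_V_ge[OF assms] den V_pos[OF assms] b1 b1_pow_p
    by (intro divide_left_mono) (auto simp: k_def mom_peak_def)
  also have "\<dots> = (1 - b1) / (1 - b1 ^ p) * (r ^ k / sqrt (1 - b2))"
    using p_ge_2 b2 b1_pow_p by (simp add: mom_peak_def r_def power_divide divide_simps)
  also have "\<dots> \<le> r ^ k / sqrt (1 - b2)"
    using b1 b1_pow_p r_bounds b2 by (intro mult_left_le_one_le) auto
  finally show ?thesis by (simp add: k_def)
qed

lemma V_le_4:
  assumes "1 \<le> n" "K \<le> phase n"
  shows "V n \<le> 4"
proof -
  have "real p ^ 2 * b2 ^ phase n \<le> real p ^ 2 * b2 ^ K"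
    using assms(2) b2 by (intro mult_left_mono power_decreasing) auto
  also have "\<dots> \<le> 1" using K_variance by (simp add: p_def mult.commute)
  finally show ?thesis using V_bounds[OF assms(1)] by simp
qed

lemma moment_ratio_le:
  assumes n: "1 \<le> n"
  shows "M n / sqrt (V n) \<le> r ^ phase n / sqrt (1 - b2) - (if K \<le> phase n then (1 - b1) / 2 else 0)"
proof -
  define s where "s = (if 1 \<le> phase n then 1 - b1 else 0)"
  have sV: "0 < sqrt (V n)" using V_pos[OF n] by simp
  have "M n / sqrt (V n) \<le> (mom_peak (phase n) - s) / sqrt (V n)"
    using M_le[OF n] sV by (simp add: s_def divide_right_mono)
  also have "\<dots> = mom_peak (phase n) / sqrt (V n) - s / sqrt (V n)"
    by (simp add: diff_divide_distrib)
  finally have "M n / sqrt (V n) \<le> r ^ phase n / sqrt (1 - b2) - s / sqrt (V n)"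
    using mom_peak_div_sqrt_V[OF n] by linarith
  moreover have "(if K \<le> phase n then (1 - b1) / 2 else 0) \<le> s / sqrt (V n)"
  proof (cases "K \<le> phase n")
    case True
    have "sqrt (V n) \<le> 2" using V_le_4[OF n True] real_sqrt_le_mono[of "V n" 4] by simp
    hence "(1 - b1) / 2 \<le> (1 - b1) / sqrt (V n)" using sV b1 by (intro divide_left_mono) auto
    thus ?thesis using True K by (simp add: s_def)
  qed (use b1 sV in \<open>simp add: s_def\<close>)
  ultimately show ?thesis by linarith
qed

lemma rate_bounds_in_period:
  assumes j: "1 \<le> j" and k: "k < p"
  shows "rate j / 2 \<le> \<alpha> / sqrt (real (j * p + 1 + k))" "\<alpha> / sqrt (real (j * p + 1 + k)) \<le> rate j"
proof -
  have "p \<le> j * p" using j by simp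
  moreover have "4 * (j * p + 1) = 4 * (j * p) + 4" by simp
  ultimately have "j * p + 1 + k \<le> 4 * (j * p + 1)" using k by linarith
  hence "sqrt (real (j * p + 1 + k)) \<le> sqrt (4 * real (j * p + 1))"
    by (metis real_sqrt_le_mono of_nat_le_iff of_nat_mult of_nat_numeral)
  also have "\<dots> = 2 * sqrt (real (j * p + 1))"
    by (simp only: real_sqrt_mult) simp
  finally have "sqrt (real (j * p + 1 + k)) \<le> 2 * sqrt (real (j * p + 1))" .
  hence "\<alpha> / (2 * sqrt (real (j * p + 1))) \<le> \<alpha> / sqrt (real (j * p + 1 + k))"
    using \<alpha> by (intro divide_left_mono) (auto simp del: of_nat_add of_nat_mult)
  thus "rate j / 2 \<le> \<alpha> / sqrt (real (j * p + 1 + k))" by (simp add: rate_def)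
  show "\<alpha> / sqrt (real (j * p + 1 + k)) \<le> rate j"
    unfolding rate_def using \<alpha> by (intro divide_left_mono) (auto simp del: of_nat_add of_nat_mult)
qed

lemma step_in_period_le:
  assumes j: "1 \<le> j" and k: "k < p"
  shows "step (j * p + 1 + k) \<le> rate j * (r ^ k / sqrt (1 - b2)) - (if K \<le> k then rate j * (1 - b1) / 4 else 0)"
proof -
  define c where "c = \<alpha> / sqrt (real (j * p + 1 + k))"
  define u where "u = r ^ k / sqrt (1 - b2)"
  define w where "w = (if K \<le> k then (1 - b1) / 2 else 0)"
  have "phase (j * p + 1 + k) = k" using k by (simp add: phase_def)
  hence "M (j * p + 1 + k) / sqrt (V (j * p + 1 + k)) \<le> u - w"
    using moment_ratio_le[of "j * p + 1 + k"] by (simp add: u_def w_def)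
  moreover have "0 \<le> c" using \<alpha> by (simp add: c_def)
  ultimately have "c * (M (j * p + 1 + k) / sqrt (V (j * p + 1 + k))) \<le> c * (u - w)"
    by (rule mult_left_mono)
  hence "step (j * p + 1 + k) \<le> c * u - c * w"
    by (simp add: step_def c_def right_diff_distrib)
  also have "\<dots> \<le> rate j * u - rate j / 2 * w"
  proof (rule diff_mono)
    show "c * u \<le> rate j * u"
      using rate_bounds_in_period[OF j k] r_bounds b2 by (intro mult_right_mono) (auto simp: c_def u_def)
    show "rate j / 2 * w \<le> c * w"
      using rate_bounds_in_period[OF j k] b1 by (intro mult_right_mono) (auto simp: c_def w_def)
  qed
  finally show ?thesis by (cases "K \<le> k") (simp_all add: u_def w_def)
qed

lemma backtrack_in_period:
  assumes j: "1 \<le> j" and l: "l \<le> p"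
  shows "(\<Sum>k<l. max (step (j * p + 1 + k)) 0) \<le> rate j * B"
proof -
  have "(\<Sum>k<l. max (step (j * p + 1 + k)) 0) \<le> (\<Sum>k<l. rate j / sqrt (1 - b2) * r ^ k)"
  proof (rule sum_mono)
    fix k assume "k \<in> {..<l}"
    moreover have "0 \<le> rate j * (1 - b1) / 4" using rate_pos[of j] b1 by simp
    ultimately have "step (j * p + 1 + k) \<le> rate j * (r ^ k / sqrt (1 - b2))"
      using step_in_period_le[OF j, of k] l by (auto split: if_splits)
    moreover have "0 \<le> rate j * (r ^ k / sqrt (1 - b2))" using rate_pos[of j] r_bounds b2 by simp
    ultimately show "max (step (j * p + 1 + k)) 0 \<le> rate j / sqrt (1 - b2) * r ^ k" by simp
  qed
  also have "\<dots> \<le> rate j / sqrt (1 - b2) * (1 / (1 - r))"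
    unfolding sum_distrib_left[symmetric] using rate_pos[of j] b2 r_bounds
    by (intro mult_left_mono geometric_partial_sum_le) auto
  finally show ?thesis by (simp add: B_eq)
qed

lemma drift_in_period:
  assumes j: "1 \<le> j"
  shows "(\<Sum>k<p. step (j * p + 1 + k)) \<le> - rate j"
proof -
  have late: "(\<Sum>k<p. (if K \<le> k then c else 0)) = c * real K" for c :: real
  proof -
    have "{k \<in> {..<p}. K \<le> k} = {K..<p}" by auto
    thus ?thesis by (simp add: sum.inter_filter[symmetric] p_def)
  qed
  have "(\<Sum>k<p. step (j * p + 1 + k))
      \<le> (\<Sum>k<p. rate j / sqrt (1 - b2) * r ^ k - (if K \<le> k then rate j * (1 - b1) / 4 else 0))"
    using step_in_period_le[OF j] by (intro sum_mono) auto
  also have "\<dots> = rate j / sqrt (1 - b2) * (\<Sum>k<p. r ^ k) - rate j * (1 - b1) / 4 * real K"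
    by (simp add: sum_subtractf sum_distrib_left late)
  also have "\<dots> \<le> rate j / sqrt (1 - b2) * (1 / (1 - r)) - rate j * (1 - b1) / 4 * real K"
    using rate_pos[of j] b2 r_bounds by (intro diff_right_mono mult_left_mono geometric_partial_sum_le) auto
  also have "\<dots> = rate j * (B - real K * (1 - b1) / 4)" by (simp add: B_eq algebra_simps)
  also have "\<dots> \<le> rate j * (- 1)"
    using K_drift rate_pos[of j] by (intro mult_left_mono) (auto simp: B_def)
  finally show ?thesis by simp
qed

lemma X_ge_partial_sums:
  "min (X i - (\<Sum>k<l. step (i + 1 + k))) (1 - (\<Sum>k<l. max (step (i + 1 + k)) 0)) \<le> X (i + l)"
  by (rule lower_bound_of_truncated_steps) (simp add: X_Suc)

lemma Y_Suc_ge: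
  assumes j: "1 \<le> j"
  shows "min (Y j + rate j) (1 - rate j * B) \<le> Y (Suc j)"
proof -
  let ?S = "\<Sum>k<p. step (j * p + 1 + k)" and ?P = "\<Sum>k<p. max (step (j * p + 1 + k)) 0"
  have "min (Y j + rate j) (1 - rate j * B) \<le> min (X (j * p) - ?S) (1 - ?P)"
    using drift_in_period[OF j] backtrack_in_period[OF j order.refl]
    by (intro min.mono) (simp_all add: Y_def)
  also have "\<dots> \<le> X (j * p + p)" by (rule X_ge_partial_sums)
  finally show ?thesis by (simp add: Y_def add.commute)
qed

lemma X_ge_Y:
  assumes j: "1 \<le> j" and l: "l \<le> p"
  shows "Y j - rate j * B \<le> X (j * p + l)"
proof -
  let ?S = "\<Sum>k<l. step (j * p + 1 + k)" and ?P = "\<Sum>k<l. max (step (j * p + 1 + k)) 0"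
  have "?S \<le> ?P" by (intro sum_mono) auto
  hence "Y j - rate j * B \<le> min (X (j * p) - ?S) (1 - ?P)"
    using backtrack_in_period[OF j l] X_bounds[of "j * p"] by (simp add: Y_def)
  also have "\<dots> \<le> X (j * p + l)" by (rule X_ge_partial_sums)
  finally show ?thesis .
qed

lemma rate_tendsto_zero: "rate \<longlonglongrightarrow> 0"
proof -
  have "0 < p" using p_ge_2 by simp
  thus ?thesis unfolding rate_def[abs_def] by real_asymp
qed

lemma rate_not_summable: "\<not> summable rate"
proof
  assume "summable rate"
  hence "summable (\<lambda>j. 2 * real p / \<alpha> * rate j)" by (rule summable_mult)
  moreover have "norm (inverse (real j)) \<le> 2 * real p / \<alpha> * rate j" if j: "1 \<le> j" for j
  proof -
    have "1 \<le> real (j * p + 1)" by simp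
    hence "sqrt (real (j * p + 1)) \<le> sqrt (real (j * p + 1) ^ 2)"
      using power_increasing[of 1 2 "real (j * p + 1)"] by (intro real_sqrt_le_mono) simp
    also have "\<dots> = real (j * p + 1)" by simp
    also have "\<dots> \<le> 2 * real p * real j"
      using mult_mono[of 1 "real j" 1 "real p"] j p_ge_2 by simp
    finally have "\<alpha> / (2 * real p * real j) \<le> rate j"
      unfolding rate_def using \<alpha> j p_ge_2 by (intro divide_left_mono) (auto simp del: of_nat_add of_nat_mult)
    thus ?thesis using \<alpha> p_ge_2 j by (simp add: field_simps)
  qed
  ultimately have "summable (\<lambda>j. inverse (real j))" by (rule summable_comparison_test')
  thus False using not_summable_harmonic by blast
qed

lemma X_eventually_ge: "0 < \<delta> \<Longrightarrow> \<forall>\<^sub>F n in sequentially. 1 - \<delta> \<le> X n"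
proof -
  assume \<delta>: "0 < \<delta>"
  have "\<forall>\<^sub>F j in sequentially. rate j * B < \<delta> / 2"
    by (rule order_tendstoD(2)[OF tendsto_mult_left_zero[OF rate_tendsto_zero]]) (use \<delta> in simp)
  hence small: "\<forall>\<^sub>F j in sequentially. 1 \<le> j \<and> rate j * B \<le> \<delta> / 2"
    by (intro eventually_conj eventually_ge_at_top) (auto elim: eventually_mono)
  then obtain j0 where j0: "\<And>j. j0 \<le> j \<Longrightarrow> 1 \<le> j \<and> rate j * B \<le> \<delta> / 2"
    unfolding eventually_sequentially by blast
  have "\<forall>\<^sub>F j in sequentially. 1 - \<delta> / 2 \<le> Y j"
  proof (rule eventually_ge_of_nonsummable_steps)
    show "min (Y j + rate j) (1 - \<delta> / 2) \<le> Y (Suc j)" if "j0 \<le> j" for j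
      using Y_Suc_ge[of j] j0[OF that] by fastforce
    show "Y j \<le> 1" for j using X_bounds by (simp add: Y_def)
  qed (use rate_pos rate_not_summable in \<open>auto intro: less_imp_le\<close>)
  with small have "\<forall>\<^sub>F j in sequentially. 1 \<le> j \<and> rate j * B \<le> \<delta> / 2 \<and> 1 - \<delta> / 2 \<le> Y j"
    by eventually_elim simp
  then obtain j1 where j1: "\<And>j. j1 \<le> j \<Longrightarrow> 1 \<le> j \<and> rate j * B \<le> \<delta> / 2 \<and> 1 - \<delta> / 2 \<le> Y j"
    unfolding eventually_sequentially by blast
  have "1 - \<delta> \<le> X n" if "j1 * p \<le> n" for n
  proof -
    have j: "j1 \<le> n div p" using div_le_mono[OF that, of p] p_ge_2 by simp
    hence "1 - \<delta> \<le> Y (n div p) - rate (n div p) * B" using j1 by fastforce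
    also have "\<dots> \<le> X (n div p * p + n mod p)"
      using j1[OF j] p_ge_2 by (intro X_ge_Y) simp_all
    finally show ?thesis by simp
  qed
  thus ?thesis unfolding eventually_sequentially by blast
qed

end

context adam_periodic
begin

definition "regret T = adam_regret \<alpha> b1 b2 (periodic_loss p) {-1..1} 0 T"

lemma regret_ge_sum: "(\<Sum>t=1..T. g t * (X (t - 1) + 1)) \<le> regret T"
proof -
  let ?h = "\<lambda>x. \<Sum>t=1..T. periodic_loss p t x"
  have "(\<Sum>t=1..T. - real p) \<le> ?h x" if "x \<in> {-1..1}" for x
  proof (rule sum_mono)
    fix t
    have "\<bar>periodic_grad p t\<bar> * \<bar>x\<bar> \<le> real p * 1"
      using that abs_periodic_grad_le[of p t] p_ge_2 by (intro mult_mono) auto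
    hence "\<bar>periodic_loss p t x\<bar> \<le> real p" by (simp add: periodic_loss_def abs_mult)
    thus "- real p \<le> periodic_loss p t x" using abs_ge_minus_self[of "periodic_loss p t x"] by linarith
  qed
  hence "bdd_below (?h ` {-1..1})" by (intro bdd_belowI) blast
  hence "(INF x\<in>{-1..1}. ?h x) \<le> - (\<Sum>t=1..T. g t)"
    by (rule cINF_lower[where x = "-1", THEN order_trans]) (auto simp: periodic_loss_def g_def sum_negf)
  moreover have "adam_x \<alpha> b1 b2 (periodic_loss p) {-1..1} 0 t = X (t - 1)" for t
    by (simp add: adam_x_def X_def state_def)
  ultimately show ?thesis
    by (simp add: regret_def adam_regret_def periodic_loss_def g_def algebra_simps sum.distrib)
qed

lemma regret_term_ge:
  assumes near: "\<And>n. N \<le> n \<Longrightarrow> 1 - 1 / real p ^ 2 \<le> X n" and t: "1 \<le> t"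
  shows "2 * g t - 1 / real p - (if t \<le> N then 4 * real p else 0) \<le> g t * (X (t - 1) + 1)"
proof -
  have nonneg: "0 \<le> real p * (X (t - 1) + 1)" using X_bounds[of "t - 1"] by simp
  consider "g t = -1" | "g t = real p" "t \<le> N" | "g t = real p" "\<not> t \<le> N"
    using g_cases by blast
  thus ?thesis
  proof cases
    case 1
    have "0 \<le> 1 / real p + (if t \<le> N then 4 * real p else 0)"
      by (intro add_nonneg_nonneg) simp_all
    hence "2 * g t - 1 / real p - (if t \<le> N then 4 * real p else 0) \<le> 2 * g t"
      by (simp only: diff_diff_eq diff_le_eq le_add_same_cancel1)
    also have "\<dots> \<le> g t * (X (t - 1) + 1)" using 1 X_bounds[of "t - 1"] by simp
    finally show ?thesis .
  next
    case 2
    have "2 * g t - 1 / real p - (if t \<le> N then 4 * real p else 0) \<le> - 2 * real p" using 2 by simp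
    also have "\<dots> \<le> g t * (X (t - 1) + 1)" using 2 nonneg by simp
    finally show ?thesis .
  next
    case 3
    have "real p * (2 - 1 / real p ^ 2) \<le> real p * (X (t - 1) + 1)"
      using near[of "t - 1"] 3 t by (intro mult_left_mono) auto
    moreover have "real p * (2 - 1 / real p ^ 2) = 2 * real p - 1 / real p"
      using p_ge_2 by (simp add: field_simps power2_eq_square)
    ultimately show ?thesis using 3 by simp
  qed
qed

end

context adam_periodic_long
begin

lemma regret_linear_lower_bound: "\<exists>c. \<forall>T. real T / real p - c \<le> regret T"
proof -
  obtain N where N: "\<And>n. N \<le> n \<Longrightarrow> 1 - 1 / real p ^ 2 \<le> X n"
    using X_eventually_ge[of "1 / real p ^ 2"] p_ge_2 unfolding eventually_sequentially by auto
  have "real T / real p - (2 + 4 * real p * real N) \<le> regret T" for T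
  proof -
    define q where "q = real T / real p"
    have "(\<Sum>t=1..T. 2 * g t - 1 / real p - (if t \<le> N then 4 * real p else 0)) \<le> regret T"
      using regret_term_ge[OF N] by (intro order_trans[OF sum_mono regret_ge_sum]) auto
    moreover have "(\<Sum>t=1..T. 2 * g t - 1 / real p - (if t \<le> N then 4 * real p else 0))
        = 2 * (\<Sum>t=1..T. g t) - q - (\<Sum>t=1..T. (if t \<le> N then 4 * real p else 0))"
      by (simp add: sum_subtractf sum_distrib_left q_def)
    moreover have "q - 1 \<le> (\<Sum>t=1..T. g t)"
      using sum_periodic_grad_ge[of p T] p_ge_2 by (simp add: g_def q_def)
    moreover have "(\<Sum>t=1..T. (if t \<le> N then 4 * real p else 0)) \<le> 4 * real p * real N"
      by (rule sum_initial_segment_le) simp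
    ultimately have "q - (2 + 4 * real p * real N) \<le> regret T" by linarith
    thus ?thesis by (simp add: q_def)
  qed
  thus ?thesis by blast
qed

lemma average_regret_not_tendsto_zero: "\<not> (\<lambda>T. regret T / real T) \<longlonglongrightarrow> 0"
proof -
  obtain c where c: "\<And>T. real T / real p - c \<le> regret T" using regret_linear_lower_bound by blast
  have "0 < 1 / real p" using p_ge_2 by simp
  moreover have "1 / real p * real T - c \<le> regret T" for T using c[of T] by simp
  ultimately show ?thesis by (rule average_not_tendsto_zero_of_linear_lower_bound)
qed

end

theorem theorem2:
  fixes \<beta>1 \<beta>2 :: real
  assumes "0 \<le> \<beta>1" "\<beta>1 < 1" "0 \<le> \<beta>2" "\<beta>2 < 1" "\<beta>1 < sqrt \<beta>2"
  shows "\<exists>(F :: real set) (f :: nat \<Rightarrow> real \<Rightarrow> real) x1.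
           compact F \<and> convex F \<and> x1 \<in> F \<and>
           (\<forall>t. convex_on UNIV (f t)) \<and>
           (\<forall>t x. f t differentiable (at x)) \<and>
           (\<exists>G. \<forall>t x. \<bar>deriv (f t) x\<bar> \<le> G) \<and>
           (\<forall>\<alpha>>0. \<not> ((\<lambda>T. adam_regret \<alpha> \<beta>1 \<beta>2 f F x1 T / real T) \<longlonglongrightarrow> 0))"
proof -
  have "0 < \<beta>2" using assms(1,3,5) by (cases "\<beta>2 = 0") auto
  obtain K where K: "1 \<le> K" "\<beta>2 ^ K * real (2 * K) ^ 2 \<le> 1"
    "backtrack_bound \<beta>1 \<beta>2 + 1 \<le> real K * (1 - \<beta>1) / 4"
    using eventually_long_period[OF assms(1-4)] unfolding eventually_sequentially by blast
  have regret: "\<not> (\<lambda>T. adam_regret \<alpha> \<beta>1 \<beta>2 (periodic_loss (2 * K)) {-1..1} 0 T / real T) \<longlonglongrightarrow> 0"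
    if "0 < \<alpha>" for \<alpha>
  proof -
    interpret adam_periodic_long \<beta>1 \<beta>2 \<alpha> K
      by unfold_locales (use assms \<open>0 < \<beta>2\<close> that K in auto)
    show ?thesis using average_regret_not_tendsto_zero by (simp add: regret_def p_def)
  qed
  have grad_bounded: "\<exists>G. \<forall>t x. \<bar>deriv (periodic_loss (2 * K) t) x\<bar> \<le> G"
    using abs_periodic_grad_le[of "2 * K"] K(1) by (auto simp: deriv_periodic_loss)
  show ?thesis
  proof (rule exI[of _ "{-1..1}"], rule exI[of _ "periodic_loss (2 * K)"], rule exI[of _ 0], intro conjI)
    show "compact {-1..1::real}" "convex {-1..1::real}" "(0::real) \<in> {-1..1}" by auto
    show "\<forall>t. convex_on UNIV (periodic_loss (2 * K) t)" using convex_periodic_loss by blast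
    show "\<forall>t x. periodic_loss (2 * K) t differentiable (at x)" using differentiable_periodic_loss by blast
    show "\<exists>G. \<forall>t x. \<bar>deriv (periodic_loss (2 * K) t) x\<bar> \<le> G" by (fact grad_bounded)
    show "\<forall>\<alpha>>0. \<not> (\<lambda>T. adam_regret \<alpha> \<beta>1 \<beta>2 (periodic_loss (2 * K)) {-1..1} 0 T / real T) \<longlonglongrightarrow> 0"
      using regret by blast
  qed
qed

end
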